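(* As $n\to\infty$, $$\sup_{1+\frac{(\log n)^2}{n}<w<2}\left|\frac{2\sqrt{w}\,(w-1)}{n}F_n(w)-1\right|\to0,$$ i.e. $F_n(w)=\frac{n}{2\sqrt w(w-1)}(1+o(1))$ uniformly for $1+\frac{(\log n)^2}{n}<w<2$.
   Context: For $w>0$ and integer $n\ge1$ let $a_n(w)=\sum_{j=0}^n w^j$, $b_n(w)=\sum_{j=1}^n jw^j$, $c_n(w)=\sum_{j=0}^n j^2w^j$, and $$F_n(w)=\frac{1}{2\sqrt{w}}\sqrt{\frac{c_n(w)}{a_n(w)}}\sqrt{\frac{a_n(w)c_n(w)-b_n(w)^2}{w\,a_n(w)^2}}.$$ $\log$ is the natural logarithm. *)

theory Defs
  imports "HOL-Analysis.Analysis"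
begin

definition a_n :: "nat \<Rightarrow> real \<Rightarrow> real" where
  "a_n n w = (\<Sum>j=0..n. w ^ j)"

definition b_n :: "nat \<Rightarrow> real \<Rightarrow> real" where
  "b_n n w = (\<Sum>j=1..n. real j * w ^ j)"

definition c_n :: "nat \<Rightarrow> real \<Rightarrow> real" where
  "c_n n w = (\<Sum>j=0..n. (real j)^2 * w ^ j)"

definition F_n :: "nat \<Rightarrow> real \<Rightarrow> real" where
  "F_n n w = 1 / (2 * sqrt w) * sqrt (c_n n w / a_n n w)
     * sqrt ((a_n n w * c_n n w - (b_n n w)^2) / (w * (a_n n w)^2))"

end

theory Submission
  imports Defs "HOL-Real_Asymp.Real_Asymp"
begin

text \<open>
  Read \<open>w\<^sup>j / a\<^sub>n(w)\<close> as a probability distribution on \<open>{0..n}\<close>: then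
  \<open>b\<^sub>n/a\<^sub>n\<close> and \<open>c\<^sub>n/a\<^sub>n\<close> are its first two moments, and
  \<open>2\<surd>w (w-1)/n \<cdot> F\<^sub>n(w)\<close> factors as \<open>\<surd>X \<cdot> \<surd>Y\<close> with
  \<open>X = c\<^sub>n/(n\<^sup>2 a\<^sub>n)\<close> and \<open>Y = (w-1)\<^sup>2 (a\<^sub>n c\<^sub>n - b\<^sub>n\<^sup>2)/(w a\<^sub>n\<^sup>2)\<close>, both in \<open>[0,1]\<close>.
  Summing the geometric series shows that the mean is at least \<open>n - 1/(w-1)\<close>, so
  \<open>1 - X = O(1/(n(w-1)))\<close>, and that \<open>1 - Y\<close> is at most four times the Einstein
  function \<open>u\<^sup>2 e\<^sup>u/(e\<^sup>u-1)\<^sup>2\<close> at \<open>u = (n+1) ln w \<ge> n(w-1)/2\<close>.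
  Both bounds vanish as soon as \<open>n(w-1) \<ge> (ln n)\<^sup>2 \<rightarrow> \<infinity>\<close>.
\<close>

lemma a_n_closed_form: "(w - 1) * a_n n w = w ^ (n + 1) - 1"
  by (induction n) (simp_all add: a_n_def algebra_simps)

lemma a_n_Suc: "a_n (Suc n) w = a_n n w + w ^ Suc n"
  by (simp add: a_n_def)

lemma b_n_Suc: "b_n (Suc n) w = b_n n w + real (Suc n) * w ^ Suc n"
  by (simp add: b_n_def)

lemma c_n_Suc: "c_n (Suc n) w = c_n n w + (real (Suc n))\<^sup>2 * w ^ Suc n"
  by (simp add: c_n_def)

lemma b_n_closed_form: "(w - 1) * b_n n w = real n * w ^ (n + 1) - a_n n w + 1"
  by (induction n) (simp_all add: a_n_def b_n_def a_n_Suc b_n_Suc algebra_simps)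

lemma c_n_closed_form:
  "(w - 1) * c_n n w = (real n)\<^sup>2 * w ^ (n + 1) - 2 * b_n n w + a_n n w - 1"
  by (induction n)
     (simp_all add: a_n_def b_n_def c_n_def a_n_Suc b_n_Suc c_n_Suc algebra_simps power2_eq_square)

lemma a_n_c_n_minus_b_n_sq:
  assumes "w \<noteq> 1"
  shows "(w - 1)\<^sup>2 * (a_n n w * c_n n w - (b_n n w)\<^sup>2)
           = w * (a_n n w)\<^sup>2 - (real n + 1)\<^sup>2 * w ^ (n + 1)"
proof -
  define p where "p = w - 1"
  define W where "W = w ^ (n + 1)"
  have p: "p \<noteq> 0" and w: "w = p + 1"
    using assms by (simp_all add: p_def)
  have a: "a_n n w = (W - 1) / p"
    using a_n_closed_form[of w n] p by (simp add: p_def W_def field_simps)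
  have b: "b_n n w = (real n * W - a_n n w + 1) / p"
    using b_n_closed_form[of w n] p by (simp add: p_def W_def field_simps)
  have c: "c_n n w = ((real n)\<^sup>2 * W - 2 * b_n n w + a_n n w - 1) / p"
    using c_n_closed_form[of w n] p by (simp add: p_def W_def field_simps)
  show ?thesis
    unfolding c b a w[symmetric] W_def[symmetric] p_def[symmetric]
    using p by (simp add: field_simps w power2_eq_square)
qed

lemma a_n_ge_1: "w \<ge> 0 \<Longrightarrow> a_n n w \<ge> 1"
  by (induction n) (simp_all add: a_n_def a_n_Suc add_increasing2)

lemma b_n_sq_le_a_n_c_n:
  assumes "w \<ge> 0"
  shows "(b_n n w)\<^sup>2 \<le> a_n n w * c_n n w"
proof -
  have "b_n n w = (\<Sum>j=0..n. sqrt (w ^ j) * (real j * sqrt (w ^ j)))"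
    using assms by (simp add: b_n_def sum.atLeast_Suc_atMost mult.left_commute)
  also have "(\<dots>)\<^sup>2 \<le> (\<Sum>j=0..n. (sqrt (w ^ j))\<^sup>2) * (\<Sum>j=0..n. (real j * sqrt (w ^ j))\<^sup>2)"
    by (rule Cauchy_Schwarz_ineq_sum)
  also have "\<dots> = a_n n w * c_n n w"
    using assms by (simp add: a_n_def c_n_def power_mult_distrib)
  finally show ?thesis .
qed

lemma c_n_le_a_n: "w \<ge> 0 \<Longrightarrow> c_n n w \<le> (real n)\<^sup>2 * a_n n w"
  unfolding c_n_def a_n_def sum_distrib_left
  by (intro sum_mono mult_right_mono power_mono) auto

lemma b_n_lower_bound:
  assumes "w > 1"
  shows "(real n - 1 / (w - 1)) * a_n n w \<le> b_n n w"
proof -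
  have "(w - 1) * ((real n - 1 / (w - 1)) * a_n n w) = real n * ((w - 1) * a_n n w) - a_n n w"
    using assms by (simp add: field_simps)
  also have "\<dots> = real n * (w ^ (n + 1) - 1) - a_n n w"
    by (simp only: a_n_closed_form)
  also have "\<dots> \<le> (w - 1) * b_n n w"
    using b_n_closed_form[of w n] by (simp add: algebra_simps)
  finally show ?thesis
    using assms by simp
qed

lemma c_n_div_a_n_lower_bound:
  assumes "w > 1" and "1 \<le> real n * (w - 1)"
  shows "1 - 2 / (real n * (w - 1)) \<le> c_n n w / ((real n)\<^sup>2 * a_n n w)"
proof -
  define m where "m = real n - 1 / (w - 1)"
  have n: "real n > 0"
    using assms by (auto intro: ccontr)
  have a: "a_n n w > 0"
    using a_n_ge_1[of w n] assms by simp
  have "m \<ge> 0"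
    using assms n by (simp add: m_def field_simps)
  then have "(m * a_n n w)\<^sup>2 \<le> (b_n n w)\<^sup>2"
    using b_n_lower_bound[OF assms(1)] a by (intro power_mono) (auto simp: m_def)
  also have "\<dots> \<le> a_n n w * c_n n w"
    using assms b_n_sq_le_a_n_c_n[of w n] by simp
  finally have mean_sq: "m\<^sup>2 \<le> c_n n w / a_n n w"
    using a by (simp add: field_simps power2_eq_square)
  have "1 - 2 / (real n * (w - 1)) \<le> (1 - 1 / (real n * (w - 1)))\<^sup>2"
    using zero_le_power2[of "1 / (real n * (w - 1))"] by (simp add: power2_diff)
  also have "\<dots> = m\<^sup>2 / (real n)\<^sup>2"
    using n assms by (simp add: m_def field_simps power2_eq_square)
  also have "\<dots> \<le> c_n n w / a_n n w / (real n)\<^sup>2"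
    using mean_sq by (rule divide_right_mono) simp
  also have "\<dots> = c_n n w / ((real n)\<^sup>2 * a_n n w)"
    by (simp add: mult.commute)
  finally show ?thesis .
qed

lemma abs_sqrt_mult_sqrt_minus_1_le:
  fixes x y :: real
  assumes "0 \<le> x" "x \<le> 1" "0 \<le> y" "y \<le> 1"
  shows "\<bar>sqrt x * sqrt y - 1\<bar> \<le> (1 - x) + (1 - y)"
proof -
  have xy: "0 \<le> x * y" "x * y \<le> 1"
    using assms by (auto intro: mult_le_one)
  have "x + y - 1 \<le> x * y"
    using mult_nonneg_nonneg[of "1 - x" "1 - y"] assms by (simp add: algebra_simps)
  also have "x * y \<le> sqrt (x * y)"
    using xy by (intro real_le_rsqrt) (simp add: power2_eq_square mult_left_le)
  finally have "x + y - 1 \<le> sqrt x * sqrt y"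
    by (simp add: real_sqrt_mult)
  moreover have "sqrt x * sqrt y \<le> 1"
    using xy by (simp flip: real_sqrt_mult)
  ultimately show ?thesis
    by linarith
qed

lemma ln_ge_half_diff:
  fixes w :: real
  assumes "1 \<le> w" "w \<le> 2"
  shows "(w - 1) / 2 \<le> ln w"
proof -
  have "(w - 1) * w \<le> (w - 1) * 2"
    using assms by (intro mult_left_mono) auto
  then have "(w - 1) / 2 \<le> 1 - 1 / w"
    using assms by (simp add: field_simps)
  also have "\<dots> \<le> ln w"
    using ln_le_minus_one[of "inverse w"] assms by (simp add: ln_inverse divide_inverse)
  finally show ?thesis .
qed

definition einstein :: "real \<Rightarrow> real" where
  "einstein u = u\<^sup>2 * exp u / (exp u - 1)\<^sup>2"

lemma einstein_tendsto_0: "(einstein \<longlongrightarrow> 0) at_top"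
  unfolding einstein_def by real_asymp

lemma normalized_variance_eq:
  assumes "w > 1"
  shows "(w - 1)\<^sup>2 * (a_n n w * c_n n w - (b_n n w)\<^sup>2) / (w * (a_n n w)\<^sup>2)
           = 1 - ((real n + 1) * (w - 1))\<^sup>2 * w ^ (n + 1) / (w * (w ^ (n + 1) - 1)\<^sup>2)"
proof -
  have a_pos: "a_n n w > 0"
    using a_n_ge_1[of w n] assms by simp
  have a: "a_n n w = (w ^ (n + 1) - 1) / (w - 1)"
    using assms a_n_closed_form[of w n] by (simp add: field_simps)
  have "(w - 1)\<^sup>2 * (a_n n w * c_n n w - (b_n n w)\<^sup>2) / (w * (a_n n w)\<^sup>2)
          = (w * (a_n n w)\<^sup>2 - (real n + 1)\<^sup>2 * w ^ (n + 1)) / (w * (a_n n w)\<^sup>2)"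
    using assms by (simp add: a_n_c_n_minus_b_n_sq)
  also have "\<dots> = 1 - (real n + 1)\<^sup>2 * w ^ (n + 1) / (w * (a_n n w)\<^sup>2)"
    using assms a_pos by (simp add: diff_divide_distrib)
  also have "(real n + 1)\<^sup>2 * w ^ (n + 1) / (w * (a_n n w)\<^sup>2)
               = ((real n + 1) * (w - 1))\<^sup>2 * w ^ (n + 1) / (w * (w ^ (n + 1) - 1)\<^sup>2)"
    using assms by (simp add: a power_divide power_mult_distrib)
  finally show ?thesis .
qed

lemma variance_defect_le_einstein:
  assumes "1 < w" "w \<le> 2"
  shows "((real n + 1) * (w - 1))\<^sup>2 * w ^ (n + 1) / (w * (w ^ (n + 1) - 1)\<^sup>2)
           \<le> 4 * einstein ((real n + 1) * ln w)"
proof -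
  define u where "u = (real n + 1) * ln w"
  have "exp u = exp (ln w) ^ (n + 1)"
    using exp_of_nat_mult[of "n + 1" "ln w"] by (simp add: u_def add.commute)
  then have W: "w ^ (n + 1) = exp u"
    using assms by simp
  have W_gt_1: "exp u > 1"
    using assms by (simp add: u_def)
  have "(real n + 1) * (w - 1) \<le> 2 * u"
    using assms ln_ge_half_diff[of w] by (simp add: u_def)
  then have "((real n + 1) * (w - 1))\<^sup>2 \<le> (2 * u)\<^sup>2"
    using assms by (intro power_mono) simp_all
  then have "((real n + 1) * (w - 1))\<^sup>2 * exp u / (exp u - 1)\<^sup>2 \<le> 4 * einstein u"
    using W_gt_1 by (simp add: einstein_def divide_right_mono power_mult_distrib)
  moreover have "((real n + 1) * (w - 1))\<^sup>2 * exp u / (w * (exp u - 1)\<^sup>2)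
                   \<le> ((real n + 1) * (w - 1))\<^sup>2 * exp u / (exp u - 1)\<^sup>2"
    using assms W_gt_1 by (simp add: frac_le)
  ultimately show ?thesis
    unfolding W u_def[symmetric] by linarith
qed

lemma scaled_F_n_eq:
  assumes "w \<ge> 1"
  shows "2 * sqrt w * (w - 1) / real n * F_n n w
           = sqrt (c_n n w / ((real n)\<^sup>2 * a_n n w))
             * sqrt ((w - 1)\<^sup>2 * (a_n n w * c_n n w - (b_n n w)\<^sup>2) / (w * (a_n n w)\<^sup>2))"
proof -
  define s where "s = sqrt (c_n n w / a_n n w)"
  define t where "t = sqrt ((a_n n w * c_n n w - (b_n n w)\<^sup>2) / (w * (a_n n w)\<^sup>2))"
  have "sqrt (c_n n w / ((real n)\<^sup>2 * a_n n w)) = s / real n"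
    by (simp add: s_def real_sqrt_divide real_sqrt_mult)
  moreover have "sqrt ((w - 1)\<^sup>2 * (a_n n w * c_n n w - (b_n n w)\<^sup>2) / (w * (a_n n w)\<^sup>2))
                   = (w - 1) * t"
    using assms by (simp add: t_def real_sqrt_mult flip: times_divide_eq_right)
  moreover have "F_n n w = 1 / (2 * sqrt w) * s * t"
    by (simp add: F_n_def s_def t_def)
  ultimately show ?thesis
    using assms by simp
qed

lemma scaled_F_n_deviation:
  assumes "1 < w" "w \<le> 2" "1 \<le> real n * (w - 1)"
  shows "\<bar>2 * sqrt w * (w - 1) / real n * F_n n w - 1\<bar>
           \<le> 2 / (real n * (w - 1)) + 4 * einstein ((real n + 1) * ln w)"
proof -
  define X where "X = c_n n w / ((real n)\<^sup>2 * a_n n w)"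
  define Y where "Y = (w - 1)\<^sup>2 * (a_n n w * c_n n w - (b_n n w)\<^sup>2) / (w * (a_n n w)\<^sup>2)"
  have a_pos: "a_n n w > 0"
    using a_n_ge_1[of w n] assms by simp
  have n_pos: "real n > 0"
    using assms by (auto intro: ccontr)
  have "0 \<le> c_n n w"
    using assms by (auto simp: c_n_def intro!: sum_nonneg)
  then have "0 \<le> X" "X \<le> 1"
    using a_pos n_pos c_n_le_a_n[of w n] assms by (simp_all add: X_def)
  moreover have "0 \<le> Y"
    using assms b_n_sq_le_a_n_c_n[of w n] by (simp add: Y_def)
  moreover have "Y \<le> 1"
    using assms by (simp add: Y_def normalized_variance_eq)
  moreover have "1 - X \<le> 2 / (real n * (w - 1))"
    using c_n_div_a_n_lower_bound[OF assms(1,3)] by (simp add: X_def)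
  moreover have "1 - Y \<le> 4 * einstein ((real n + 1) * ln w)"
    using variance_defect_le_einstein[OF assms(1,2)] assms
    by (simp add: Y_def normalized_variance_eq)
  moreover have "2 * sqrt w * (w - 1) / real n * F_n n w = sqrt X * sqrt Y"
    unfolding X_def Y_def using assms by (intro scaled_F_n_eq) simp
  ultimately show ?thesis
    using abs_sqrt_mult_sqrt_minus_1_le[of X Y] by linarith
qed

lemma half_diff_le_ln_power:
  assumes "1 \<le> w" "w \<le> 2"
  shows "real n * (w - 1) / 2 \<le> (real n + 1) * ln w"
proof -
  have "real n * ((w - 1) / 2) \<le> real n * ln w"
    using ln_ge_half_diff[OF assms] by (intro mult_left_mono) auto
  also have "\<dots> \<le> (real n + 1) * ln w"
    using assms by (simp add: distrib_right)
  finally show ?thesis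
    by simp
qed

lemma scaled_F_n_uniformly_close_to_1:
  assumes "\<epsilon> > 0"
  obtains L where "\<And>n w. L \<le> real n * (w - 1) \<Longrightarrow> 1 < w \<Longrightarrow> w \<le> 2 \<Longrightarrow>
                     \<bar>2 * sqrt w * (w - 1) / real n * F_n n w - 1\<bar> \<le> \<epsilon>"
proof -
  have "\<forall>\<^sub>F u in at_top. einstein u < \<epsilon> / 8"
    using assms by (intro order_tendstoD(2)[OF einstein_tendsto_0]) simp
  then obtain U where U: "\<And>u. u \<ge> U \<Longrightarrow> einstein u < \<epsilon> / 8"
    by (auto simp: eventually_at_top_linorder)
  show ?thesis
  proof
    fix n :: nat and w :: real
    assume L: "max (max 1 (4 / \<epsilon>)) (2 * U) \<le> real n * (w - 1)" and w: "1 < w" "w \<le> 2"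
    have "2 / (real n * (w - 1)) \<le> 2 / (4 / \<epsilon>)"
      using L assms by (intro frac_le) auto
    then have error_ratio: "2 / (real n * (w - 1)) \<le> \<epsilon> / 2"
      by simp
    have "U \<le> (real n + 1) * ln w"
      using L half_diff_le_ln_power[of w n] w by linarith
    then have error_einstein: "4 * einstein ((real n + 1) * ln w) \<le> \<epsilon> / 2"
      using U by fastforce
    show "\<bar>2 * sqrt w * (w - 1) / real n * F_n n w - 1\<bar> \<le> \<epsilon>"
      using scaled_F_n_deviation[of w n] L w error_ratio error_einstein by linarith
  qed
qed

theorem lemma3p7:
  shows "\<forall>\<epsilon>>0. \<forall>\<^sub>F n in sequentially.
           \<forall>w::real. 1 + (ln (real n))^2 / real n < w \<and> w < 2 \<longrightarrow>
             \<bar>2 * sqrt w * (w - 1) / real n * F_n n w - 1\<bar> \<le> \<epsilon>"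
proof (intro allI impI)
  fix \<epsilon> :: real
  assume "\<epsilon> > 0"
  then obtain L where L: "\<And>n w. L \<le> real n * (w - 1) \<Longrightarrow> 1 < w \<Longrightarrow> w \<le> 2 \<Longrightarrow>
                            \<bar>2 * sqrt w * (w - 1) / real n * F_n n w - 1\<bar> \<le> \<epsilon>"
    using scaled_F_n_uniformly_close_to_1 by blast
  have "filterlim (\<lambda>n. (ln (real n))\<^sup>2) at_top sequentially"
    by real_asymp
  then have "\<forall>\<^sub>F n in sequentially. max 1 L \<le> (ln (real n))\<^sup>2"
    unfolding filterlim_at_top by blast
  then show "\<forall>\<^sub>F n in sequentially.
           \<forall>w::real. 1 + (ln (real n))^2 / real n < w \<and> w < 2 \<longrightarrow>
             \<bar>2 * sqrt w * (w - 1) / real n * F_n n w - 1\<bar> \<le> \<epsilon>"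
  proof (rule eventually_mono, intro allI impI)
    fix n :: nat and w :: real
    assume ln_n: "max 1 L \<le> (ln (real n))\<^sup>2" and w: "1 + (ln (real n))^2 / real n < w \<and> w < 2"
    then have "n > 0"
      by (auto intro: ccontr)
    then have "(ln (real n))\<^sup>2 < real n * (w - 1)" and "0 < (ln (real n))\<^sup>2 / real n"
      using w ln_n by (simp add: field_simps, intro divide_pos_pos) auto
    then show "\<bar>2 * sqrt w * (w - 1) / real n * F_n n w - 1\<bar> \<le> \<epsilon>"
      using L ln_n w by simp
  qed
qed

end
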